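(* Let $M,N\ge1$, $\gamma>0$, $\lambda_x,\lambda_v,\lambda_w>0$, and let $\{(\hat x_i,\hat v_i)\}_{i=1}^N$ solve the centralized herding system \[ \frac{d\hat x_i}{dt}=\hat v_i,\qquad \frac{d\hat v_i}{dt}=\frac{\lambda_x}{N}\sum_{j=1}^N\hat\phi_{ij}(\hat x_j-\hat x_i)+\frac{\lambda_v}{N}\sum_{j=1}^N\hat\phi_{ij}(\hat v_j-\hat v_i)-\lambda_w\hat x_i,\qquad \hat\phi_{ij}=(1+|\hat x_i-\hat x_j|^2)^{-\gamma/2}. \] Fix $t>0$ and assume $\sum_{i,j}|\hat v_i(t)-\hat v_j(t)|=0$ while $\sum_{i,j}|\hat x_i(t)-\hat x_j(t)|\ne0$. Then $\mathcal{E}_2'(t)=\mathcal{E}_2''(t)=0$ and $\mathcal{E}_2'''(t)<0$.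
   Context: $|\cdot|$ is the Euclidean norm on $\mathbb{R}^M$. $X=\sum_i|\hat x_i|^2$, $V=\sum_i|\hat v_i|^2$, \[ S_\gamma=\begin{cases}\frac1N\sum_{i,j}\big\{(1+|\hat x_i-\hat x_j|^2)^{-(\gamma-2)/2}-1\big\}, & 0<\gamma<2,\\ \frac1N\sum_{i,j}\log(1+|\hat x_i-\hat x_j|^2), & \gamma=2,\\ \frac1N\sum_{i,j}\big\{1-(1+|\hat x_i-\hat x_j|^2)^{-(\gamma-2)/2}\big\}, & \gamma>2,\end{cases} \qquad \beta_\gamma=\begin{cases}2-\gamma,&0<\gamma<2,\\2,&\gamma=2,\\\gamma-2,&\gamma>2,\end{cases} \] and $\mathcal{E}_2=\lambda_wX+V+\lambda_x\beta_\gamma^{-1}S_\gamma$; primes denote time derivatives along the solution. *)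

theory Defs
  imports "HOL-Analysis.Analysis"
begin

text \<open>Agents are indexed by i < N; positions/velocities live in real^'m (Euclidean R^M,
 M = CARD('m) \<ge> 1). Trajectories are functions of time.\<close>

definition herd_phi :: "real \<Rightarrow> real^('m::finite) \<Rightarrow> real^'m \<Rightarrow> real" where
  "herd_phi \<gamma> a b = (1 + (norm (a - b))\<^sup>2) powr (-\<gamma>/2)"

definition herd_S :: "real \<Rightarrow> nat \<Rightarrow> (nat \<Rightarrow> real^'m::finite) \<Rightarrow> real" where
  "herd_S \<gamma> N x =
    (if \<gamma> < 2 then (1/N) * (\<Sum>i<N. \<Sum>j<N. (1 + (norm (x i - x j))\<^sup>2) powr (-(\<gamma>-2)/2) - 1)
     else if \<gamma> = 2 then (1/N) * (\<Sum>i<N. \<Sum>j<N. ln (1 + (norm (x i - x j))\<^sup>2))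
     else (1/N) * (\<Sum>i<N. \<Sum>j<N. 1 - (1 + (norm (x i - x j))\<^sup>2) powr (-(\<gamma>-2)/2)))"

definition herd_beta :: "real \<Rightarrow> real" where
  "herd_beta \<gamma> = (if \<gamma> < 2 then 2 - \<gamma> else if \<gamma> = 2 then 2 else \<gamma> - 2)"

definition herd_E2 :: "real \<Rightarrow> real \<Rightarrow> real \<Rightarrow> nat \<Rightarrow>
    (nat \<Rightarrow> real \<Rightarrow> real^'m::finite) \<Rightarrow> (nat \<Rightarrow> real \<Rightarrow> real^'m) \<Rightarrow> real \<Rightarrow> real" where
  "herd_E2 \<gamma> lx lw N x v s =
     lw * (\<Sum>i<N. (norm (x i s))\<^sup>2) + (\<Sum>i<N. (norm (v i s))\<^sup>2)
     + lx / herd_beta \<gamma> * herd_S \<gamma> N (\<lambda>i. x i s)"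

end

theory Submission
  imports Defs
begin

text \<open>Along solutions E2 dissipates: E2' = -(lv/N) \<Sum>i j. phi_ij |v_i - v_j|^2. Here the
  interaction part of V' is symmetrised using phi_ij = phi_ji, and S is a pair potential whose
  derivative is beta phi, which cancels the position coupling. At a time of velocity consensus
  every summand of E2' vanishes to second order, so E2' = E2'' = 0 and
  E2''' = -(2 lv/N) \<Sum>i j. phi_ij |a_i - a_j|^2 with a the accelerations. These cannot all
  agree when the positions do not: projecting on a direction separating two agents, the
  alignment term vanishes, the attraction term pulls the extremal agents inwards, and the
  confinement -lw x then separates their accelerations.\<close>

lemma has_vector_derivative_imp_tendsto_quotient:
  fixes g :: "real \<Rightarrow> 'a::real_normed_vector"
  assumes "(g has_vector_derivative g') (at t)"
  shows "((\<lambda>s. (g s - g t) /\<^sub>R (s - t)) \<longlongrightarrow> g') (at t)"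
proof -
  have "((\<lambda>s. norm (g s - g t - (s - t) *\<^sub>R g') / norm (s - t)) \<longlongrightarrow> 0) (at t)"
    using assms unfolding has_vector_derivative_def has_derivative_iff_norm by auto
  moreover have "\<forall>\<^sub>F s in at t.
      norm (g s - g t - (s - t) *\<^sub>R g') / norm (s - t) = norm ((g s - g t) /\<^sub>R (s - t) - g')"
  proof (rule eventually_mono[OF eventually_at_filter[THEN iffD2]])
    fix s assume "s \<noteq> t"
    then have "(g s - g t) /\<^sub>R (s - t) - g' = (1 / (s - t)) *\<^sub>R (g s - g t - (s - t) *\<^sub>R g')"
      by (simp add: scaleR_diff_right divide_inverse)
    then show "norm (g s - g t - (s - t) *\<^sub>R g') / norm (s - t) = norm ((g s - g t) /\<^sub>R (s - t) - g')"
      by (simp add: divide_simps)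
  qed simp
  ultimately have "((\<lambda>s. norm ((g s - g t) /\<^sub>R (s - t) - g')) \<longlongrightarrow> 0) (at t)"
    by (rule Lim_transform_eventually)
  then show ?thesis
    by (simp add: tendsto_norm_zero_iff LIM_zero_iff)
qed

lemma has_real_derivative_inner_vanishing:
  fixes f g :: "real \<Rightarrow> 'a::real_inner"
  assumes "g t = 0" and "(g has_vector_derivative g') (at t)" and "isCont f t"
  shows "((\<lambda>s. f s \<bullet> g s) has_real_derivative f t \<bullet> g') (at t)"
proof -
  have "((\<lambda>s. f s \<bullet> ((g s - g t) /\<^sub>R (s - t))) \<longlongrightarrow> f t \<bullet> g') (at t)"
    using assms(3) unfolding isCont_def
    by (intro tendsto_inner has_vector_derivative_imp_tendsto_quotient assms(2))
  then show ?thesis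
    unfolding has_field_derivative_iff using assms(1) by (simp add: divide_inverse mult.commute)
qed

lemma has_real_derivative_norm_power2:
  fixes f :: "real \<Rightarrow> 'a::real_inner"
  assumes "(f has_vector_derivative f') (at s)"
  shows "((\<lambda>s. (norm (f s))\<^sup>2) has_real_derivative 2 * (f s \<bullet> f')) (at s)"
proof -
  have "((\<lambda>s. f s \<bullet> f s) has_derivative (*) (2 * (f s \<bullet> f'))) (at s)"
    using has_derivative_inner[OF assms[unfolded has_vector_derivative_def] assms[unfolded has_vector_derivative_def]]
    by (rule has_derivative_eq_rhs) (simp add: fun_eq_iff inner_commute)
  then show ?thesis
    by (simp add: has_field_derivative_def power2_norm_eq_inner)
qed

lemma one_add_norm_power2_pos: "1 + (norm z)\<^sup>2 > (0::real)"
  by (simp add: add_pos_nonneg)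

lemma has_real_derivative_weighted_norm_power2:
  fixes w :: "real \<Rightarrow> 'a::real_inner"
  assumes "(c has_real_derivative c') (at s)" and "(w has_vector_derivative w') (at s)"
  shows "((\<lambda>s. c s * (norm (w s))\<^sup>2) has_real_derivative (c' *\<^sub>R w s + (2 * c s) *\<^sub>R w') \<bullet> w s) (at s)"
  using DERIV_mult[OF assms(1) has_real_derivative_norm_power2[OF assms(2)]]
  by (simp add: inner_add_left power2_norm_eq_inner inner_commute algebra_simps)

lemma deriv_has_real_derivative_on_open:
  assumes "open S" and "t \<in> S" and "\<And>s. s \<in> S \<Longrightarrow> (f has_real_derivative f' s) (at s)"
    and "(f' has_real_derivative f'') (at t)"
  shows "(deriv f has_real_derivative f'') (at t)"
  using assms(4,1,2) by (rule has_field_derivative_transform_within_open) (simp add: DERIV_imp_deriv[OF assms(3)])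

lemma sum_pairs_symmetrize:
  fixes p q :: "nat \<Rightarrow> 'a::real_inner"
  assumes "\<And>i j. K i j = K j i"
  shows "(\<Sum>i<N. \<Sum>j<N. K i j * (p i \<bullet> (q j - q i)))
       = - (\<Sum>i<N. \<Sum>j<N. K i j * ((p i - p j) \<bullet> (q i - q j))) / 2"
proof -
  let ?L = "\<Sum>i<N. \<Sum>j<N. K i j * (p i \<bullet> (q j - q i))"
  have "2 * ?L = ?L + (\<Sum>i<N. \<Sum>j<N. K j i * (p j \<bullet> (q i - q j)))"
    by (subst (2) sum.swap) simp
  also have "\<dots> = (\<Sum>i<N. \<Sum>j<N. - (K i j * ((p i - p j) \<bullet> (q i - q j))))"
    unfolding sum.distrib[symmetric]
    by (intro sum.cong refl) (simp add: assms[of _ i for i] algebra_simps)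
  finally show ?thesis
    by (simp add: sum_negf)
qed

lemma double_sum_norm_diff_eq_0_iff:
  fixes f :: "nat \<Rightarrow> 'a::real_normed_vector"
  shows "(\<Sum>i<N. \<Sum>j<N. norm (f i - f j)) = 0 \<longleftrightarrow> (\<forall>i<N. \<forall>j<N. f i = f j)"
  by (auto simp: sum_nonneg_eq_0_iff sum_nonneg)

definition herd_potential :: "real \<Rightarrow> real \<Rightarrow> real" where
  "herd_potential \<gamma> r =
    (if \<gamma> < 2 then (1 + r) powr (-(\<gamma>-2)/2) - 1
     else if \<gamma> = 2 then ln (1 + r)
     else 1 - (1 + r) powr (-(\<gamma>-2)/2))"

lemma herd_S_eq_sum_potential:
  "herd_S \<gamma> N y = (1/N) * (\<Sum>i<N. \<Sum>j<N. herd_potential \<gamma> ((norm (y i - y j))\<^sup>2))"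
  by (simp add: herd_S_def herd_potential_def)

lemma herd_beta_nonzero: "herd_beta \<gamma> \<noteq> 0"
  by (simp add: herd_beta_def)

lemma herd_potential_has_real_derivative:
  assumes pos: "1 + r > 0"
  shows "(herd_potential \<gamma> has_real_derivative herd_beta \<gamma> / 2 * (1 + r) powr (-\<gamma>/2)) (at r)"
proof -
  have exponent: "-(\<gamma>-2)/2 - 1 = -\<gamma>/2"
    by (simp add: field_simps)
  have power: "((\<lambda>r. (1 + r) powr (-(\<gamma>-2)/2)) has_real_derivative (2 - \<gamma>) / 2 * (1 + r) powr (-\<gamma>/2)) (at r)"
    using DERIV_fun_powr[OF DERIV_add[OF DERIV_const[of 1] DERIV_ident] pos, of "-(\<gamma>-2)/2"]
    by (simp add: exponent field_simps)
  consider "\<gamma> < 2" | "\<gamma> = 2" | "\<gamma> > 2"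
    by linarith
  then show ?thesis
  proof cases
    case 1
    then show ?thesis
      using DERIV_diff[OF power DERIV_const[of 1]]
      by (simp add: herd_potential_def[abs_def] herd_beta_def)
  next
    case 2
    then show ?thesis
      using DERIV_chain2[OF DERIV_ln_divide[OF pos] DERIV_add[OF DERIV_const[of 1] DERIV_ident]] pos
      by (simp add: herd_potential_def[abs_def] herd_beta_def powr_minus_divide)
  next
    case 3
    have "herd_beta \<gamma> / 2 * (1 + r) powr (-\<gamma>/2) = 0 - (2 - \<gamma>) / 2 * (1 + r) powr (-\<gamma>/2)"
      using 3 by (simp add: herd_beta_def field_simps)
    with 3 show ?thesis
      using DERIV_diff[OF DERIV_const[of 1] power]
      by (simp add: herd_potential_def[abs_def])
  qed
qed

lemma herd_S_has_real_derivative: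
  fixes y :: "nat \<Rightarrow> real \<Rightarrow> real^'m::finite"
  assumes "\<And>i. i < N \<Longrightarrow> (y i has_vector_derivative u i) (at s)"
  shows "((\<lambda>s. herd_S \<gamma> N (\<lambda>i. y i s)) has_real_derivative (1/N) *
      (\<Sum>i<N. \<Sum>j<N. herd_beta \<gamma> * herd_phi \<gamma> (y i s) (y j s) * ((y i s - y j s) \<bullet> (u i - u j)))) (at s)"
proof -
  have "((\<lambda>s. herd_potential \<gamma> ((norm (y i s - y j s))\<^sup>2)) has_real_derivative
      herd_beta \<gamma> * herd_phi \<gamma> (y i s) (y j s) * ((y i s - y j s) \<bullet> (u i - u j))) (at s)"
    if "i < N" "j < N" for i j
    using DERIV_chain2[OF herd_potential_has_real_derivative[OF one_add_norm_power2_pos, of \<gamma>]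
        has_real_derivative_norm_power2[OF has_vector_derivative_diff[OF assms[OF that(1)] assms[OF that(2)]]]]
    by (simp add: herd_phi_def mult.assoc)
  then show ?thesis
    unfolding herd_S_eq_sum_potential by (intro DERIV_cmult DERIV_sum) auto
qed

lemma herd_phi_commute: "herd_phi \<gamma> a b = herd_phi \<gamma> b a"
  by (simp add: herd_phi_def norm_minus_commute)

lemma herd_phi_pos: "herd_phi \<gamma> a b > 0"
  using one_add_norm_power2_pos[of "a - b"] by (simp add: herd_phi_def)

definition herd_force :: "real \<Rightarrow> real \<Rightarrow> real \<Rightarrow> real \<Rightarrow> nat \<Rightarrow>
    (nat \<Rightarrow> real^'m::finite) \<Rightarrow> (nat \<Rightarrow> real^'m) \<Rightarrow> nat \<Rightarrow> real^'m" where
  "herd_force \<gamma> lx lv lw N p q i =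
     (lx / N) *\<^sub>R (\<Sum>j<N. herd_phi \<gamma> (p i) (p j) *\<^sub>R (p j - p i))
   + (lv / N) *\<^sub>R (\<Sum>j<N. herd_phi \<gamma> (p i) (p j) *\<^sub>R (q j - q i))
   - lw *\<^sub>R p i"

lemma sum_inner_herd_force:
  "(\<Sum>i<N. q i \<bullet> herd_force \<gamma> lx lv lw N p q i) =
     - lx / (2 * N) * (\<Sum>i<N. \<Sum>j<N. herd_phi \<gamma> (p i) (p j) * ((p i - p j) \<bullet> (q i - q j)))
     - lv / (2 * N) * (\<Sum>i<N. \<Sum>j<N. herd_phi \<gamma> (p i) (p j) * (norm (q i - q j))\<^sup>2)
     - lw * (\<Sum>i<N. p i \<bullet> q i)"
proof -
  let ?K = "\<lambda>i j. herd_phi \<gamma> (p i) (p j)"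
  have "(\<Sum>i<N. q i \<bullet> herd_force \<gamma> lx lv lw N p q i) =
      lx / N * (\<Sum>i<N. \<Sum>j<N. ?K i j * (q i \<bullet> (p j - p i)))
    + lv / N * (\<Sum>i<N. \<Sum>j<N. ?K i j * (q i \<bullet> (q j - q i)))
    - lw * (\<Sum>i<N. p i \<bullet> q i)"
    by (simp add: herd_force_def inner_add_right inner_diff_right inner_sum_right sum.distrib
        sum_subtractf sum_distrib_left inner_commute)
  also have "\<dots> = - lx / (2 * N) * (\<Sum>i<N. \<Sum>j<N. ?K i j * ((p i - p j) \<bullet> (q i - q j)))
     - lv / (2 * N) * (\<Sum>i<N. \<Sum>j<N. ?K i j * ((q i - q j) \<bullet> (q i - q j)))
     - lw * (\<Sum>i<N. p i \<bullet> q i)"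
    using sum_pairs_symmetrize[where K = ?K and N = N and p = q and q = p]
      sum_pairs_symmetrize[where K = ?K and N = N and p = q and q = q]
    by (simp add: herd_phi_commute inner_commute)
  finally show ?thesis
    by (simp add: power2_norm_eq_inner)
qed

lemma herd_force_not_constant:
  assumes "lx \<ge> 0" and "lw > 0" and "i0 < N" and "j0 < N" and "p i0 \<noteq> p j0"
    and "\<And>i j. i < N \<Longrightarrow> j < N \<Longrightarrow> q i = q j"
  shows "\<exists>i<N. \<exists>j<N. herd_force \<gamma> lx lv lw N p q i \<noteq> herd_force \<gamma> lx lv lw N p q j"
proof -
  define e where "e = p i0 - p j0"
  define f where "f k = p k \<bullet> e" for k
  define im where "im = arg_min_on (\<lambda>k. - f k) {..<N}"
  define jm where "jm = arg_min_on f {..<N}"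
  have N_ne: "{..<N} \<noteq> {}"
    using assms(3) by auto
  have im: "im < N" "\<And>k. k < N \<Longrightarrow> f k \<le> f im"
    using arg_min_if_finite(1)[OF _ N_ne] arg_min_least[OF _ N_ne, of _ "\<lambda>k. - f k"]
    by (auto simp: im_def)
  have jm: "jm < N" "\<And>k. k < N \<Longrightarrow> f jm \<le> f k"
    using arg_min_if_finite(1)[OF _ N_ne] arg_min_least[OF _ N_ne, of _ f]
    by (auto simp: jm_def)
  have "f i0 - f j0 = e \<bullet> e"
    by (simp add: f_def e_def inner_diff_left)
  moreover have "e \<bullet> e > 0"
    using assms(5) by (simp add: e_def)
  ultimately have "f j0 < f i0"
    by linarith
  then have "f jm < f im"
    using im(2)[OF assms(3)] jm(2)[OF assms(4)] by linarith
  have force_e: "herd_force \<gamma> lx lv lw N p q i \<bullet> e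
      = lx / N * (\<Sum>k<N. herd_phi \<gamma> (p i) (p k) * (f k - f i)) - lw * f i" if "i < N" for i
  proof -
    have "(\<Sum>k<N. herd_phi \<gamma> (p i) (p k) *\<^sub>R (q k - q i)) = 0"
      using assms(6)[OF _ that] by (intro sum.neutral) auto
    then show ?thesis
      by (simp add: herd_force_def f_def inner_diff_left inner_add_left inner_sum_left)
  qed
  have "lx / N * (\<Sum>k<N. herd_phi \<gamma> (p im) (p k) * (f k - f im)) \<le> 0"
    using im(2) assms(1) less_imp_le[OF herd_phi_pos]
    by (intro mult_nonneg_nonpos sum_nonpos mult_nonneg_nonpos) (auto simp: less_imp_le)
  moreover have "lx / N * (\<Sum>k<N. herd_phi \<gamma> (p jm) (p k) * (f k - f jm)) \<ge> 0"
    using jm(2) assms(1) less_imp_le[OF herd_phi_pos]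
    by (intro mult_nonneg_nonneg sum_nonneg) (auto simp: less_imp_le)
  moreover have "lw * f jm < lw * f im"
    using \<open>f jm < f im\<close> assms(2) by simp
  ultimately have "herd_force \<gamma> lx lv lw N p q im \<bullet> e < herd_force \<gamma> lx lv lw N p q jm \<bullet> e"
    unfolding force_e[OF im(1)] force_e[OF jm(1)] by linarith
  then show ?thesis
    using im(1) jm(1) by force
qed

locale herding_solution =
  fixes \<gamma> lx lv lw :: real and N :: nat and I :: "real set"
    and x v :: "nat \<Rightarrow> real \<Rightarrow> real^'m::finite"
  assumes open_domain: "open I"
    and position_deriv: "\<And>i s. i < N \<Longrightarrow> s \<in> I \<Longrightarrow> (x i has_vector_derivative v i s) (at s)"
    and velocity_deriv: "\<And>i s. i < N \<Longrightarrow> s \<in> I \<Longrightarrow>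
      (v i has_vector_derivative herd_force \<gamma> lx lv lw N (\<lambda>j. x j s) (\<lambda>j. v j s) i) (at s)"
begin

abbreviation phi :: "nat \<Rightarrow> nat \<Rightarrow> real \<Rightarrow> real" where
  "phi i j s \<equiv> herd_phi \<gamma> (x i s) (x j s)"

abbreviation acc :: "nat \<Rightarrow> real \<Rightarrow> real^'m" where
  "acc i s \<equiv> herd_force \<gamma> lx lv lw N (\<lambda>j. x j s) (\<lambda>j. v j s) i"

abbreviation energy :: "real \<Rightarrow> real" where
  "energy \<equiv> herd_E2 \<gamma> lx lw N x v"

definition dissipation :: "real \<Rightarrow> real" where
  "dissipation s = - lv / N * (\<Sum>i<N. \<Sum>j<N. phi i j s * (norm (v i s - v j s))\<^sup>2)"

lemma energy_has_real_derivative: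
  assumes "s \<in> I"
  shows "(energy has_real_derivative dissipation s) (at s)"
proof -
  have "(energy has_real_derivative lw * (\<Sum>i<N. 2 * (x i s \<bullet> v i s)) + (\<Sum>i<N. 2 * (v i s \<bullet> acc i s))
      + lx / herd_beta \<gamma> * (1/N * (\<Sum>i<N. \<Sum>j<N. herd_beta \<gamma> * phi i j s * ((x i s - x j s) \<bullet> (v i s - v j s)))))
      (at s)" (is "(_ has_real_derivative ?D) _")
    unfolding herd_E2_def[abs_def] using assms
    by (intro DERIV_add DERIV_cmult DERIV_sum has_real_derivative_norm_power2 herd_S_has_real_derivative
        position_deriv velocity_deriv) auto
  moreover have "?D = dissipation s"
    using sum_inner_herd_force[where q = "\<lambda>j. v j s" and p = "\<lambda>j. x j s" and N = N and \<gamma> = \<gamma>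
        and lx = lx and lv = lv and lw = lw]
    by (simp add: dissipation_def herd_beta_nonzero sum_distrib_left[symmetric] inner_commute field_simps)
  ultimately show ?thesis
    by (simp only:)
qed

definition phi_deriv :: "nat \<Rightarrow> nat \<Rightarrow> real \<Rightarrow> real" where
  "phi_deriv i j s = - \<gamma> / 2 * (1 + (norm (x i s - x j s))\<^sup>2) powr (- \<gamma> / 2 - 1)
     * (2 * ((x i s - x j s) \<bullet> (v i s - v j s)))"

text \<open>Written as an inner product with v_i - v_j, so that at a consensus time only
  continuity of the first factor is needed to differentiate once more.\<close>

definition dissipation_deriv :: "real \<Rightarrow> real" where
  "dissipation_deriv s = - lv / N * (\<Sum>i<N. \<Sum>j<N.
     (phi_deriv i j s *\<^sub>R (v i s - v j s) + (2 * phi i j s) *\<^sub>R (acc i s - acc j s)) \<bullet> (v i s - v j s))"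

lemma phi_has_real_derivative:
  assumes "i < N" and "j < N" and "s \<in> I"
  shows "((\<lambda>s. phi i j s) has_real_derivative phi_deriv i j s) (at s)"
proof -
  have "((\<lambda>s. 1 + (norm (x i s - x j s))\<^sup>2) has_real_derivative 2 * ((x i s - x j s) \<bullet> (v i s - v j s))) (at s)"
    using DERIV_add[OF DERIV_const has_real_derivative_norm_power2[OF
          has_vector_derivative_diff[OF position_deriv[OF assms(1,3)] position_deriv[OF assms(2,3)]]]]
    by simp
  from DERIV_fun_powr[OF this, of "- \<gamma> / 2"] show ?thesis
    by (simp add: herd_phi_def phi_deriv_def add_pos_nonneg)
qed

lemma dissipation_has_real_derivative:
  assumes "s \<in> I"
  shows "(dissipation has_real_derivative dissipation_deriv s) (at s)"
  unfolding dissipation_def[abs_def] dissipation_deriv_def using assms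
  by (intro DERIV_cmult DERIV_sum has_real_derivative_weighted_norm_power2 phi_has_real_derivative
      has_vector_derivative_diff velocity_deriv) auto

lemma dissipation_deriv_has_real_derivative_at_consensus:
  assumes "t \<in> I" and consensus: "\<And>i j. i < N \<Longrightarrow> j < N \<Longrightarrow> v i t = v j t"
  shows "(dissipation_deriv has_real_derivative
      - 2 * lv / N * (\<Sum>i<N. \<Sum>j<N. phi i j t * (norm (acc i t - acc j t))\<^sup>2)) (at t)"
proof -
  have cont_x: "isCont (x i) t" and cont_v: "isCont (v i) t" if "i < N" for i
    using that assms(1) position_deriv velocity_deriv
    by (blast intro: has_vector_derivative_continuous)+
  have cont_phi: "isCont (\<lambda>s. phi i j s) t" if "i < N" "j < N" for i j
    unfolding herd_phi_def using cont_x that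
    by (intro continuous_intros) (auto simp: one_add_norm_power2_pos[THEN less_imp_neq, symmetric])
  have cont_acc: "isCont (\<lambda>s. acc i s) t" if "i < N" for i
    unfolding herd_force_def using cont_x cont_v cont_phi that
    by (intro continuous_intros) auto
  have "((\<lambda>s. (phi_deriv i j s *\<^sub>R (v i s - v j s) + (2 * phi i j s) *\<^sub>R (acc i s - acc j s)) \<bullet> (v i s - v j s))
      has_real_derivative 2 * phi i j t * (norm (acc i t - acc j t))\<^sup>2) (at t)"
    if "i < N" "j < N" for i j
  proof -
    have "isCont (\<lambda>s. phi_deriv i j s *\<^sub>R (v i s - v j s) + (2 * phi i j s) *\<^sub>R (acc i s - acc j s)) t"
      unfolding phi_deriv_def using that cont_x cont_v cont_phi cont_acc
      by (intro continuous_intros) (auto simp: one_add_norm_power2_pos[THEN less_imp_neq, symmetric])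
    from has_real_derivative_inner_vanishing[OF _ has_vector_derivative_diff[OF
          velocity_deriv[OF that(1) assms(1)] velocity_deriv[OF that(2) assms(1)]] this]
    show ?thesis
      using consensus[OF that] by (simp add: power2_norm_eq_inner)
  qed
  then have "(dissipation_deriv has_real_derivative
      - lv / N * (\<Sum>i<N. \<Sum>j<N. 2 * phi i j t * (norm (acc i t - acc j t))\<^sup>2)) (at t)"
    unfolding dissipation_deriv_def[abs_def] by (intro DERIV_cmult DERIV_sum) auto
  moreover have "- lv / N * (\<Sum>i<N. \<Sum>j<N. 2 * phi i j t * (norm (acc i t - acc j t))\<^sup>2)
      = - 2 * lv / N * (\<Sum>i<N. \<Sum>j<N. phi i j t * (norm (acc i t - acc j t))\<^sup>2)"
    by (simp add: sum_distrib_left algebra_simps)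
  ultimately show ?thesis
    by (simp only:)
qed

lemma energy_derivatives_at_consensus:
  assumes "t \<in> I" and consensus: "\<And>i j. i < N \<Longrightarrow> j < N \<Longrightarrow> v i t = v j t"
  shows "deriv energy t = 0" and "(deriv ^^ 2) energy t = 0"
    and "(deriv ^^ 3) energy t = - 2 * lv / N * (\<Sum>i<N. \<Sum>j<N. phi i j t * (norm (acc i t - acc j t))\<^sup>2)"
proof -
  have velocity_diff: "v i t - v j t = 0" if "i < N" "j < N" for i j
    using consensus[OF that] by simp
  have second: "(deriv energy has_real_derivative dissipation_deriv s) (at s)" if "s \<in> I" for s
    using open_domain that energy_has_real_derivative dissipation_has_real_derivative[OF that]
    by (rule deriv_has_real_derivative_on_open)
  have "deriv energy t = dissipation t"
    using energy_has_real_derivative[OF assms(1)] by (rule DERIV_imp_deriv)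
  then show "deriv energy t = 0"
    by (simp add: dissipation_def velocity_diff)
  have "(deriv ^^ 2) energy t = dissipation_deriv t"
    using second[OF assms(1)] by (simp add: numeral_2_eq_2 DERIV_imp_deriv)
  then show "(deriv ^^ 2) energy t = 0"
    by (simp add: dissipation_deriv_def velocity_diff)
  have "(deriv (deriv energy) has_real_derivative
      - 2 * lv / N * (\<Sum>i<N. \<Sum>j<N. phi i j t * (norm (acc i t - acc j t))\<^sup>2)) (at t)"
    using open_domain assms(1) second dissipation_deriv_has_real_derivative_at_consensus[OF assms]
    by (rule deriv_has_real_derivative_on_open)
  then show "(deriv ^^ 3) energy t = - 2 * lv / N * (\<Sum>i<N. \<Sum>j<N. phi i j t * (norm (acc i t - acc j t))\<^sup>2)"
    by (simp add: numeral_3_eq_3 DERIV_imp_deriv)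
qed

lemma third_deriv_energy_neg_at_consensus:
  assumes "lx \<ge> 0" and "lv > 0" and "lw > 0" and "t \<in> I"
    and consensus: "\<And>i j. i < N \<Longrightarrow> j < N \<Longrightarrow> v i t = v j t"
    and "i0 < N" and "j0 < N" and "x i0 t \<noteq> x j0 t"
  shows "(deriv ^^ 3) energy t < 0"
proof -
  obtain i j where ij: "i < N" "j < N" "acc i t \<noteq> acc j t"
    using herd_force_not_constant[where p = "\<lambda>j. x j t" and q = "\<lambda>j. v j t" and \<gamma> = \<gamma> and lv = lv,
        OF assms(1,3,6,7,8) consensus] by blast
  have term_nonneg: "0 \<le> phi i j t * (norm (acc i t - acc j t))\<^sup>2" for i j
    by (intro mult_nonneg_nonneg less_imp_le[OF herd_phi_pos]) simp
  have "0 < phi i j t * (norm (acc i t - acc j t))\<^sup>2"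
    using ij(3) by (intro mult_pos_pos herd_phi_pos) simp
  also have "\<dots> \<le> (\<Sum>j<N. phi i j t * (norm (acc i t - acc j t))\<^sup>2)"
    using ij(2) term_nonneg by (intro member_le_sum) auto
  also have "\<dots> \<le> (\<Sum>i<N. \<Sum>j<N. phi i j t * (norm (acc i t - acc j t))\<^sup>2)"
    using ij(1) term_nonneg by (intro member_le_sum sum_nonneg) auto
  finally show ?thesis
    using assms(2) ij(1) by (simp add: energy_derivatives_at_consensus(3)[OF assms(4) consensus]
        mult_pos_pos divide_pos_pos)
qed

end

theorem lemma5p3:
  fixes x v :: "nat \<Rightarrow> real \<Rightarrow> real^'m::finite"
    and N :: nat and \<gamma> lx lv lw t :: real and I :: "real set"
  assumes "N \<ge> 1" and "\<gamma> > 0" and "lx > 0" and "lv > 0" and "lw > 0"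
    and "open I" and "t \<in> I" and "t > 0"
    and xd: "\<And>i s. i < N \<Longrightarrow> s \<in> I \<Longrightarrow> (x i has_vector_derivative v i s) (at s)"
    and vd: "\<And>i s. i < N \<Longrightarrow> s \<in> I \<Longrightarrow> (v i has_vector_derivative
          ((lx / N) *\<^sub>R (\<Sum>j<N. herd_phi \<gamma> (x i s) (x j s) *\<^sub>R (x j s - x i s))
         + (lv / N) *\<^sub>R (\<Sum>j<N. herd_phi \<gamma> (x i s) (x j s) *\<^sub>R (v j s - v i s))
         - lw *\<^sub>R x i s)) (at s)"
    and "(\<Sum>i<N. \<Sum>j<N. norm (v i t - v j t)) = 0"
    and "(\<Sum>i<N. \<Sum>j<N. norm (x i t - x j t)) \<noteq> 0"
  shows "deriv (herd_E2 \<gamma> lx lw N x v) t = 0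
       \<and> (deriv ^^ 2) (herd_E2 \<gamma> lx lw N x v) t = 0
       \<and> (deriv ^^ 3) (herd_E2 \<gamma> lx lw N x v) t < 0"
proof -
  interpret herding_solution \<gamma> lx lv lw N I x v
    using assms(6) xd vd by unfold_locales (simp_all add: herd_force_def)
  have consensus: "\<And>i j. i < N \<Longrightarrow> j < N \<Longrightarrow> v i t = v j t"
    using assms(11) unfolding double_sum_norm_diff_eq_0_iff by blast
  obtain i0 j0 where "i0 < N" and "j0 < N" and "x i0 t \<noteq> x j0 t"
    using assms(12) unfolding double_sum_norm_diff_eq_0_iff by blast
  then show ?thesis
    using energy_derivatives_at_consensus(1,2)[OF assms(7) consensus] assms(3)
      third_deriv_energy_neg_at_consensus[OF _ assms(4,5,7) consensus]
    by auto
qed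

end
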